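(* Let $A(z)=\sum_{k=0}^{\infty}a_kz^k$ with $a_0\neq 0$ and $H(z)=\sum_{k=1}^{\infty}h_kz^k$ with $h_1\neq 0$ be analytic in a disk $|z|<R$ with $R>1$, with real coefficients. Let the Sheffer polynomials $p_k$ be defined by $A(t)e^{xH(t)}=\sum_{k=0}^{\infty}p_k(x)t^k$ for $|t|<R$, and assume $p_k(x)\ge 0$ for all $x\ge 0$ and all $k$, $A(1)\neq 0$ and $H'(1)=1$. Let $(b_n)$ be a positive increasing sequence with $b_n\to\infty$ and $b_n/n\to 0$, and define $$T_n^*(f;x)=\frac{e^{-\frac{n}{b_n}xH(1)}}{A(1)}\sum_{k=0}^{\infty}p_k\Big(\frac{n}{b_n}x\Big)f\Big(\frac{k}{n}b_n\Big).$$ Let $\rho(x)=1+x^2$. Then for every $f\in C_\rho^k(\mathbb{R}_0^+)$, $$\lim_{n\to\infty}\|T_n^*(f;\cdot)-f\|_\rho=0.$$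
   Context: $\mathbb{R}_0^+=[0,\infty)$. For a function $g$ on $\mathbb{R}_0^+$, $\|g\|_\rho=\sup_{x\ge 0}\frac{|g(x)|}{\rho(x)}$. $B_\rho(\mathbb{R}_0^+)$ is the set of functions $f$ on $\mathbb{R}_0^+$ with $|f(x)|\le M_f\rho(x)$ for all $x\ge0$ and some constant $M_f>0$; $C_\rho(\mathbb{R}_0^+)$ is the set of continuous functions in $B_\rho(\mathbb{R}_0^+)$; and $C_\rho^k(\mathbb{R}_0^+)$ is the set of $f\in C_\rho(\mathbb{R}_0^+)$ for which $\lim_{x\to\infty}\frac{f(x)}{\rho(x)}$ exists and is finite. *)

theory Defs
  imports "HOL-Analysis.Analysis"
begin

definition rho :: "real \<Rightarrow> real" where
  "rho x = 1 + x\<^sup>2"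

text \<open>Weighted sup norm over [0,\<infinity>), valued in the extended reals
  (so that it may be \<infinity>).\<close>
definition rho_norm :: "(real \<Rightarrow> real) \<Rightarrow> ereal" where
  "rho_norm g = (SUP x\<in>{0..}. ereal (\<bar>g x\<bar> / rho x))"

definition C_rho_k :: "(real \<Rightarrow> real) set" where
  "C_rho_k = {f. continuous_on {0..} f \<and>
                 (\<exists>M>0. \<forall>x\<ge>0. \<bar>f x\<bar> \<le> M * rho x) \<and>
                 (\<exists>L. ((\<lambda>x. f x / rho x) \<longlongrightarrow> L) at_top)}"

definition pser :: "(nat \<Rightarrow> real) \<Rightarrow> real \<Rightarrow> real" where
  "pser c t = (\<Sum>k. c k * t ^ k)"

definition Tstar :: "(nat \<Rightarrow> real) \<Rightarrow> (nat \<Rightarrow> real) \<Rightarrow> (nat \<Rightarrow> real \<Rightarrow> real)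
    \<Rightarrow> (nat \<Rightarrow> real) \<Rightarrow> nat \<Rightarrow> (real \<Rightarrow> real) \<Rightarrow> real \<Rightarrow> real" where
  "Tstar a h p b n f x =
     exp (- (real n / b n) * x * pser h 1) / pser a 1 *
     (\<Sum>k. p k (real n / b n * x) * f (real k / real n * b n))"

end

theory Submission
  imports Defs
begin

text \<open>
  Put \<delta> = b n / n and y = x / \<delta>. Then T_n^* f (x) is the average of f over the nodes \<delta> k with
  the weights p_k(y) exp(-y H(1)) / A(1), which are nonnegative and, by the generating function
  at t = 1, sum to 1. Differentiating the generating function once and twice at t = 1 gives the
  first two moments of the weights, so T_n^* reproduces t and t^2 up to errors of order \<delta> \<rho>(x).
  Writing f = g + L \<rho> with g(x) / \<rho>(x) \<rightarrow> 0, uniform continuity on a compact interval and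
  smallness at infinity give |g s - g u| \<le> \<epsilon> (1 + \<rho> s + \<rho> u) + K (s - u)^2; averaging this
  with the positive weights bounds |T_n^* f - f| by (3 \<epsilon> + O(\<delta>)) \<rho>(x) uniformly in x.
\<close>

section \<open>Factorial moments from a generating function\<close>

lemma pser_has_field_derivative:
  fixes c :: "nat \<Rightarrow> real"
  assumes "\<And>t. \<bar>t\<bar> < R \<Longrightarrow> summable (\<lambda>k. c k * t ^ k)" and "\<bar>t\<bar> < R"
  shows "(pser c has_field_derivative pser (diffs c) t) (at t)"
  unfolding pser_def[abs_def] using termdiffs_strong'[of R c t] assms by simp

lemma summable_pser_diffs:
  fixes c :: "nat \<Rightarrow> real"
  assumes "\<And>t. \<bar>t\<bar> < R \<Longrightarrow> summable (\<lambda>k. c k * t ^ k)" and "\<bar>t\<bar> < R"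
  shows "summable (\<lambda>k. diffs c k * t ^ k)"
  using termdiff_converges[of t R c] assms by simp

lemma diffs_sums_derivative:
  fixes c :: "nat \<Rightarrow> real"
  assumes sums: "\<And>t. \<bar>t\<bar> < R \<Longrightarrow> (\<lambda>k. c k * t ^ k) sums G t"
    and deriv: "\<And>t. \<bar>t\<bar> < R \<Longrightarrow> (G has_field_derivative G' t) (at t)"
    and t: "\<bar>t\<bar> < R"
  shows "(\<lambda>k. diffs c k * t ^ k) sums G' t"
proof -
  have summable: "summable (\<lambda>k. c k * s ^ k)" if "\<bar>s\<bar> < R" for s
    using sums[OF that] by (rule sums_summable)
  have "(pser c has_field_derivative pser (diffs c) t) (at t)"
    by (rule pser_has_field_derivative[OF _ t], rule summable)
  moreover have "(pser c has_field_derivative G' t) (at t)"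
  proof (rule has_field_derivative_transform_within_open[OF deriv[OF t]])
    show "open {-R<..<R}" "t \<in> {-R<..<R}"
      using t by auto
    fix s :: real assume "s \<in> {-R<..<R}"
    then have "\<bar>s\<bar> < R" by auto
    then show "G s = pser c s"
      using sums[of s] by (simp add: pser_def sums_iff)
  qed
  ultimately have "pser (diffs c) t = G' t"
    by (rule DERIV_unique)
  moreover have "summable (\<lambda>k. diffs c k * t ^ k)"
    by (rule summable_pser_diffs[OF _ t], rule summable)
  ultimately show ?thesis
    by (simp add: pser_def sums_iff)
qed

lemma diffs_sums_iff:
  fixes c :: "nat \<Rightarrow> real"
  shows "diffs c sums s \<longleftrightarrow> (\<lambda>k. real k * c k) sums s"
  using sums_Suc_iff[of "\<lambda>k. real k * c k" s] by (simp add: diffs_def)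

lemma diffs_diffs_sums_iff:
  fixes c :: "nat \<Rightarrow> real"
  shows "diffs (diffs c) sums s \<longleftrightarrow> (\<lambda>k. real k * (real k - 1) * c k) sums s"
proof -
  have "(\<lambda>k. real k * diffs c k) = diffs (\<lambda>k. (real k - 1) * c k)"
    by (simp add: diffs_def fun_eq_iff algebra_simps)
  then have "diffs (diffs c) sums s \<longleftrightarrow> diffs (\<lambda>k. (real k - 1) * c k) sums s"
    by (simp only: diffs_sums_iff)
  also have "\<dots> \<longleftrightarrow> (\<lambda>k. real k * ((real k - 1) * c k)) sums s"
    by (rule diffs_sums_iff)
  finally show ?thesis
    by (simp only: mult.assoc)
qed

lemma factorial_moments_sums:
  fixes c :: "nat \<Rightarrow> real"
  assumes R: "R > 1"
    and sums: "\<And>t. \<bar>t\<bar> < R \<Longrightarrow> (\<lambda>k. c k * t ^ k) sums G t"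
    and G': "\<And>t. \<bar>t\<bar> < R \<Longrightarrow> (G has_field_derivative G' t) (at t)"
    and G'': "\<And>t. \<bar>t\<bar> < R \<Longrightarrow> (G' has_field_derivative G'' t) (at t)"
  shows "c sums G 1"
    and "(\<lambda>k. real k * c k) sums G' 1"
    and "(\<lambda>k. real k * (real k - 1) * c k) sums G'' 1"
proof -
  have diffs_sums: "(\<lambda>k. diffs c k * t ^ k) sums G' t" if "\<bar>t\<bar> < R" for t
    using diffs_sums_derivative[OF sums G' that] .
  have R1: "\<bar>1::real\<bar> < R"
    using R by simp
  show "c sums G 1"
    using sums[OF R1] by simp
  show "(\<lambda>k. real k * c k) sums G' 1"
    using diffs_sums[OF R1] by (simp add: diffs_sums_iff)
  show "(\<lambda>k. real k * (real k - 1) * c k) sums G'' 1"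
    using diffs_sums_derivative[OF diffs_sums G'' R1] by (simp add: diffs_diffs_sums_iff)
qed

section \<open>A Korovkin-type estimate in the weighted norm\<close>

lemma rho_ge_1: "rho x \<ge> 1"
  unfolding rho_def by simp

lemma rho_pos: "rho x > 0"
  using rho_ge_1[of x] by simp

lemma le_rho: "x \<le> rho x"
proof (cases "x \<le> 1")
  case True
  then show ?thesis
    unfolding rho_def by (simp add: add_increasing2)
next
  case False
  then have "x * 1 \<le> x * x"
    by (intro mult_left_mono) auto
  then show ?thesis
    unfolding rho_def by (simp add: power2_eq_square)
qed

lemma abs_scaled_linear_le_rho:
  assumes "x \<ge> 0" and "\<delta> \<ge> 0"
  shows "\<bar>\<delta> * (P * x + \<delta> * Q)\<bar> \<le> \<delta> * (\<bar>P\<bar> + \<delta> * \<bar>Q\<bar>) * rho x"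
proof -
  have "\<bar>P * x + \<delta> * Q\<bar> \<le> \<bar>P\<bar> * x + \<delta> * \<bar>Q\<bar>"
    using assms abs_triangle_ineq[of "P * x" "\<delta> * Q"] by (simp add: abs_mult)
  also have "\<dots> \<le> \<bar>P\<bar> * rho x + \<delta> * \<bar>Q\<bar> * rho x"
    using mult_left_mono[OF le_rho, of "\<bar>P\<bar>" x] mult_left_mono[OF rho_ge_1, of "\<delta> * \<bar>Q\<bar>" x] assms
    by simp
  finally have "\<delta> * \<bar>P * x + \<delta> * Q\<bar> \<le> \<delta> * (\<bar>P\<bar> * rho x + \<delta> * \<bar>Q\<bar> * rho x)"
    using assms(2) by (rule mult_left_mono)
  moreover have "\<bar>\<delta> * (P * x + \<delta> * Q)\<bar> = \<delta> * \<bar>P * x + \<delta> * Q\<bar>"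
    using assms(2) by (simp add: abs_mult)
  ultimately show ?thesis
    by (simp add: algebra_simps)
qed

definition modulus_bound :: "real \<Rightarrow> real \<Rightarrow> (real \<Rightarrow> real) \<Rightarrow> bool" where
  "modulus_bound e K g \<longleftrightarrow>
     (\<forall>s\<ge>0. \<forall>u\<ge>0. \<bar>g s - g u\<bar> \<le> e + e * rho s + e * rho u + K * (s - u)\<^sup>2)"

lemma modulus_boundD:
  "modulus_bound e K g \<Longrightarrow> s \<ge> 0 \<Longrightarrow> u \<ge> 0 \<Longrightarrow>
    \<bar>g s - g u\<bar> \<le> e + e * rho s + e * rho u + K * (s - u)\<^sup>2"
  unfolding modulus_bound_def by blast

lemma modulus_bound_exists:
  fixes g :: "real \<Rightarrow> real"
  assumes cont: "continuous_on {0..} g" and lim: "((\<lambda>s. g s / rho s) \<longlongrightarrow> 0) at_top"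
    and e: "e > 0"
  obtains K where "K \<ge> 0" and "modulus_bound e K g"
proof -
  obtain X where X: "X \<ge> 0" and tail: "\<And>s. s \<ge> X \<Longrightarrow> \<bar>g s\<bar> \<le> e * rho s"
  proof -
    obtain X0 where X0: "\<And>s. s \<ge> X0 \<Longrightarrow> \<bar>g s / rho s\<bar> < e"
      using tendstoD[OF lim e] by (auto simp: eventually_at_top_linorder)
    show ?thesis
    proof (rule that[of "max X0 0"])
      fix s assume "s \<ge> max X0 0"
      then have "\<bar>g s\<bar> < e * rho s"
        using X0[of s] by (simp add: abs_divide abs_of_pos[OF rho_pos] pos_divide_less_eq[OF rho_pos])
      then show "\<bar>g s\<bar> \<le> e * rho s" by simp
    qed simp
  qed
  have cont_X: "continuous_on {0..X+1} g"
    using cont by (rule continuous_on_subset) auto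
  obtain \<eta> where \<eta>: "0 < \<eta>" "\<eta> \<le> 1"
    and near: "\<And>s u. s \<in> {0..X+1} \<Longrightarrow> u \<in> {0..X+1} \<Longrightarrow> \<bar>s - u\<bar> < \<eta> \<Longrightarrow> \<bar>g s - g u\<bar> < e"
  proof -
    obtain \<eta>0 where \<eta>0: "\<eta>0 > 0"
      and uc: "\<And>s u. s \<in> {0..X+1} \<Longrightarrow> u \<in> {0..X+1} \<Longrightarrow> dist u s < \<eta>0 \<Longrightarrow> dist (g u) (g s) < e"
      using uniformly_continuous_onE[OF compact_uniformly_continuous[OF cont_X compact_Icc] e] by metis
    show ?thesis
    proof (rule that[of "min \<eta>0 1"])
      fix s u assume "s \<in> {0..X+1}" "u \<in> {0..X+1}" "\<bar>s - u\<bar> < min \<eta>0 1"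
      then show "\<bar>g s - g u\<bar> < e"
        using uc[of u s] by (simp add: dist_real_def abs_minus_commute[of u] abs_minus_commute[of "g u"])
    qed (use \<eta>0 in auto)
  qed
  obtain K0 where K0: "K0 \<ge> 0" and bounded: "\<And>s. s \<in> {0..X+1} \<Longrightarrow> \<bar>g s\<bar> \<le> K0"
  proof -
    obtain K0 where "K0 > 0" "\<forall>y \<in> g ` {0..X+1}. norm y \<le> K0"
      using compact_imp_bounded[OF compact_continuous_image[OF cont_X compact_Icc]]
      unfolding bounded_pos by blast
    then show ?thesis
      using that[of K0] by simp
  qed
  have global: "\<bar>g s\<bar> \<le> K0 + e * rho s" if "s \<ge> 0" for s
  proof (cases "s \<le> X + 1")
    case True
    then show ?thesis
      using bounded[of s] that e rho_pos[of s] by (simp add: add_increasing2)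
  next
    case False
    then show ?thesis
      using tail[of s] K0 by simp
  qed
  show ?thesis
  proof (rule that[of "2 * K0 / \<eta>\<^sup>2"], unfold modulus_bound_def, safe)
    show "2 * K0 / \<eta>\<^sup>2 \<ge> 0"
      using K0 by simp
    fix s u :: real assume s: "s \<ge> 0" and u: "u \<ge> 0"
    have nonneg: "e * rho s \<ge> 0" "e * rho u \<ge> 0" "2 * K0 / \<eta>\<^sup>2 * (s - u)\<^sup>2 \<ge> 0"
      using e rho_pos[of s] rho_pos[of u] K0 by auto
    \<comment> \<open>points closer than \<open>\<eta> \<le> 1\<close> lie both in \<open>[0, X + 1]\<close> or both in \<open>[X, \<infinity>)\<close>\<close>
    consider "\<bar>s - u\<bar> \<ge> \<eta>" | "\<bar>s - u\<bar> < \<eta>" "s \<le> X + 1" "u \<le> X + 1" | "s \<ge> X" "u \<ge> X"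
      using \<eta> by linarith
    then show "\<bar>g s - g u\<bar> \<le> e + e * rho s + e * rho u + 2 * K0 / \<eta>\<^sup>2 * (s - u)\<^sup>2"
    proof cases
      case 1
      have "\<eta>\<^sup>2 \<le> (s - u)\<^sup>2"
        using 1 \<eta> by (metis abs_ge_zero less_imp_le power2_abs power_mono)
      then have "2 * K0 \<le> 2 * K0 / \<eta>\<^sup>2 * (s - u)\<^sup>2"
        using K0 \<eta> by (simp add: field_simps mult_left_mono)
      then show ?thesis
        using global[OF s] global[OF u] e by linarith
    next
      case 2
      then show ?thesis
        using near[of s u] s u nonneg by fastforce
    next
      case 3
      then show ?thesis
        using tail[of s] tail[of u] e nonneg by linarith
    qed
  qed
qed

lemma C_rho_k_modulus_bound:
  assumes "f \<in> C_rho_k"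
  obtains L where "\<And>e. e > 0 \<Longrightarrow> \<exists>K\<ge>0. modulus_bound e K (\<lambda>s. f s - L * rho s)"
proof -
  obtain L where f_cont: "continuous_on {0..} f" and f_lim: "((\<lambda>s. f s / rho s) \<longlongrightarrow> L) at_top"
    using assms unfolding C_rho_k_def by blast
  have cont: "continuous_on {0..} (\<lambda>s. f s - L * rho s)"
    unfolding rho_def by (intro continuous_intros f_cont)
  have "((\<lambda>s. f s / rho s - L) \<longlongrightarrow> L - L) at_top"
    by (intro tendsto_intros f_lim)
  then have lim: "((\<lambda>s. (f s - L * rho s) / rho s) \<longlongrightarrow> 0) at_top"
    using rho_pos[THEN less_imp_neq, THEN not_sym] by (simp add: diff_divide_distrib)
  show ?thesis
  proof (rule that)
    fix e :: real assume "e > 0"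
    obtain K where "K \<ge> 0" "modulus_bound e K (\<lambda>s. f s - L * rho s)"
      using modulus_bound_exists[OF cont lim \<open>e > 0\<close>] .
    then show "\<exists>K\<ge>0. modulus_bound e K (\<lambda>s. f s - L * rho s)"
      by blast
  qed
qed

lemma positive_sum_estimate:
  fixes W T :: "nat \<Rightarrow> real" and f :: "real \<Rightarrow> real"
  assumes W_nonneg: "\<And>k. W k \<ge> 0" and T_nonneg: "\<And>k. T k \<ge> 0" and x: "x \<ge> 0" and e: "e \<ge> 0"
    and sums0: "W sums 1"
    and sums1: "(\<lambda>k. W k * T k) sums m1"
    and sums2: "(\<lambda>k. W k * (T k)\<^sup>2) sums m2"
    and modulus: "modulus_bound e K (\<lambda>s. f s - L * rho s)"
  shows "summable (\<lambda>k. W k * f (T k))"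
    and "\<bar>(\<Sum>k. W k * f (T k)) - f x\<bar> \<le>
      3 * e * rho x + (e + \<bar>L\<bar>) * \<bar>m2 - x\<^sup>2\<bar> + K * (m2 - 2 * x * m1 + x\<^sup>2)"
proof -
  define gap where "gap k = W k * ((f (T k) - L * rho (T k)) - (f x - L * rho x))" for k
  define bnd where "bnd k = W k * (e + e * rho (T k) + e * rho x + K * (T k - x)\<^sup>2)" for k
  have "bnd = (\<lambda>k. (2 * e + e * rho x + K * x\<^sup>2) * W k + (- 2 * K * x) * (W k * T k)
      + (e + K) * (W k * (T k)\<^sup>2))"
    by (simp add: fun_eq_iff bnd_def rho_def algebra_simps power2_eq_square)
  then have bnd_sums: "bnd sums ((2 * e + e * rho x + K * x\<^sup>2) * 1 + (- 2 * K * x) * m1 + (e + K) * m2)"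
    by (simp only:) (intro sums_add sums_mult sums0 sums1 sums2)
  have gap_le: "norm (gap k) \<le> bnd k" for k
    unfolding gap_def bnd_def real_norm_def abs_mult abs_of_nonneg[OF W_nonneg]
    by (rule mult_left_mono[OF modulus_boundD[OF modulus T_nonneg x] W_nonneg])
  have gap_summable: "summable gap"
    using summable_comparison_test'[OF sums_summable[OF bnd_sums] gap_le] .
  have gap_bound: "\<bar>suminf gap\<bar> \<le> suminf bnd"
    using norm_suminf_le[OF gap_le sums_summable[OF bnd_sums]] by simp
  have "(\<lambda>k. W k * f (T k)) = (\<lambda>k. gap k + (f x - L * rho x) * W k + L * (W k + W k * (T k)\<^sup>2))"
    by (simp add: fun_eq_iff gap_def rho_def algebra_simps)
  then have f_sums: "(\<lambda>k. W k * f (T k)) sums (suminf gap + (f x - L * rho x) * 1 + L * (1 + m2))"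
    by (simp only:) (intro sums_add sums_mult summable_sums gap_summable sums0 sums2)
  then show "summable (\<lambda>k. W k * f (T k))"
    by (rule sums_summable)
  have "(\<Sum>k. W k * f (T k)) - f x = suminf gap + L * (m2 - x\<^sup>2)"
    using sums_unique[OF f_sums] by (simp add: rho_def algebra_simps)
  then have "\<bar>(\<Sum>k. W k * f (T k)) - f x\<bar> \<le> \<bar>suminf gap\<bar> + \<bar>L\<bar> * \<bar>m2 - x\<^sup>2\<bar>"
    unfolding abs_mult[symmetric] by (simp only: abs_triangle_ineq)
  moreover have "suminf bnd = e + 2 * e * rho x + e * (m2 - x\<^sup>2) + K * (m2 - 2 * x * m1 + x\<^sup>2)"
    using sums_unique[OF bnd_sums] by (simp add: rho_def algebra_simps power2_eq_square)
  moreover have "e \<le> e * rho x"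
    using mult_left_mono[OF rho_ge_1 e] by simp
  moreover have "e * (m2 - x\<^sup>2) \<le> e * \<bar>m2 - x\<^sup>2\<bar>"
    using e by (simp add: mult_left_mono)
  ultimately show "\<bar>(\<Sum>k. W k * f (T k)) - f x\<bar> \<le>
      3 * e * rho x + (e + \<bar>L\<bar>) * \<bar>m2 - x\<^sup>2\<bar> + K * (m2 - 2 * x * m1 + x\<^sup>2)"
    using gap_bound by (simp add: distrib_right)
qed

lemma rho_norm_tendsto_zeroI:
  assumes "\<And>\<epsilon>. \<epsilon> > 0 \<Longrightarrow> eventually (\<lambda>n. \<forall>x\<ge>0. \<bar>g n x\<bar> \<le> \<epsilon> * rho x) F"
  shows "((\<lambda>n. rho_norm (g n)) \<longlongrightarrow> 0) F"
proof (rule order_tendstoI)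
  fix r :: ereal assume "r < 0"
  moreover have "0 \<le> rho_norm (g n)" for n
    unfolding rho_norm_def by (rule SUP_upper2[of 0]) (auto intro: divide_nonneg_pos rho_pos)
  ultimately show "eventually (\<lambda>n. r < rho_norm (g n)) F"
    by (intro always_eventually allI) (rule less_le_trans)
next
  fix r :: ereal assume "0 < r"
  then obtain \<epsilon> :: real where \<epsilon>: "\<epsilon> > 0" "ereal \<epsilon> < r"
    using ereal_dense2 by (metis ereal_less(2) less_ereal.simps(1) dense)
  have "rho_norm (g n) \<le> ereal \<epsilon>" if "\<forall>x\<ge>0. \<bar>g n x\<bar> \<le> \<epsilon> * rho x" for n
    unfolding rho_norm_def
  proof (rule SUP_least)
    fix x :: real assume "x \<in> {0..}"
    then show "ereal (\<bar>g n x\<bar> / rho x) \<le> ereal \<epsilon>"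
      using that rho_pos[of x] by (simp add: divide_le_eq)
  qed
  then show "eventually (\<lambda>n. rho_norm (g n) < r) F"
    using assms[OF \<epsilon>(1)] \<epsilon>(2) by (auto elim!: eventually_mono intro: le_less_trans)
qed

section \<open>Sheffer weights\<close>

locale sheffer =
  fixes a h :: "nat \<Rightarrow> real" and R :: real and p :: "nat \<Rightarrow> real \<Rightarrow> real"
  assumes radius: "R > 1"
    and a_summable: "\<And>t. \<bar>t\<bar> < R \<Longrightarrow> summable (\<lambda>k. a k * t ^ k)"
    and h_summable: "\<And>t. \<bar>t\<bar> < R \<Longrightarrow> summable (\<lambda>k. h k * t ^ k)"
    and generating: "\<And>x t. \<bar>t\<bar> < R \<Longrightarrow> (\<lambda>k. p k x * t ^ k) sums (pser a t * exp (x * pser h t))"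
    and p_nonneg: "\<And>k x. x \<ge> 0 \<Longrightarrow> p k x \<ge> 0"
    and pser_a_1_nonzero: "pser a 1 \<noteq> 0"
    and deriv_pser_h_1: "deriv (pser h) 1 = 1"
begin

lemma pser_derivatives:
  assumes "\<bar>t\<bar> < R"
  shows "(pser a has_field_derivative pser (diffs a) t) (at t)"
    and "(pser h has_field_derivative pser (diffs h) t) (at t)"
    and "(pser (diffs a) has_field_derivative pser (diffs (diffs a)) t) (at t)"
    and "(pser (diffs h) has_field_derivative pser (diffs (diffs h)) t) (at t)"
proof -
  have diffs_summable: "summable (\<lambda>k. diffs a k * s ^ k)" "summable (\<lambda>k. diffs h k * s ^ k)"
    if "\<bar>s\<bar> < R" for s
    by (rule summable_pser_diffs[OF _ that], rule a_summable h_summable; assumption)+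
  show "(pser a has_field_derivative pser (diffs a) t) (at t)"
    and "(pser h has_field_derivative pser (diffs h) t) (at t)"
    and "(pser (diffs a) has_field_derivative pser (diffs (diffs a)) t) (at t)"
    and "(pser (diffs h) has_field_derivative pser (diffs (diffs h)) t) (at t)"
    by (rule pser_has_field_derivative[OF _ assms],
        rule a_summable h_summable diffs_summable; assumption)+
qed

lemma pser_diffs_h_1: "pser (diffs h) 1 = 1"
  using DERIV_imp_deriv[OF pser_derivatives(2)] radius deriv_pser_h_1 by simp

lemma generating_has_derivative:
  assumes t: "\<bar>t\<bar> < R"
  shows "((\<lambda>t. pser a t * exp (y * pser h t)) has_field_derivative
      (pser (diffs a) t + y * pser a t * pser (diffs h) t) * exp (y * pser h t)) (at t)"
proof -
  note D = pser_derivatives[OF t]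
  have "((\<lambda>t. pser a t * exp (y * pser h t)) has_field_derivative
      pser (diffs a) t * exp (y * pser h t) + exp (y * pser h t) * (y * pser (diffs h) t) * pser a t) (at t)"
    by (rule DERIV_mult[OF D(1) DERIV_fun_exp[OF DERIV_cmult[OF D(2)]]])
  then show ?thesis
    by (simp add: algebra_simps)
qed

lemma generating_has_second_derivative:
  assumes t: "\<bar>t\<bar> < R"
  shows "((\<lambda>t. (pser (diffs a) t + y * pser a t * pser (diffs h) t) * exp (y * pser h t))
      has_field_derivative
        (pser (diffs (diffs a)) t + 2 * y * pser (diffs a) t * pser (diffs h) t
          + y * pser a t * pser (diffs (diffs h)) t + y\<^sup>2 * pser a t * (pser (diffs h) t)\<^sup>2)
        * exp (y * pser h t)) (at t)"
proof -
  note D = pser_derivatives[OF t]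
  have "((\<lambda>t. (pser (diffs a) t + y * pser a t * pser (diffs h) t) * exp (y * pser h t))
      has_field_derivative
        (pser (diffs (diffs a)) t + (y * pser (diffs a) t * pser (diffs h) t
          + pser (diffs (diffs h)) t * (y * pser a t))) * exp (y * pser h t)
        + exp (y * pser h t) * (y * pser (diffs h) t)
          * (pser (diffs a) t + y * pser a t * pser (diffs h) t)) (at t)"
    by (rule DERIV_mult[OF DERIV_add[OF D(3) DERIV_mult[OF DERIV_cmult[OF D(1)] D(4)]]
          DERIV_fun_exp[OF DERIV_cmult[OF D(2)]]])
  then show ?thesis
    by (simp add: algebra_simps power2_eq_square)
qed

lemma p_factorial_moments:
  shows "(\<lambda>k. p k y) sums (pser a 1 * exp (y * pser h 1))"
    and "(\<lambda>k. real k * p k y) sums ((pser (diffs a) 1 + y * pser a 1) * exp (y * pser h 1))"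
    and "(\<lambda>k. real k * (real k - 1) * p k y) sums
      ((pser (diffs (diffs a)) 1 + 2 * y * pser (diffs a) 1
        + y * pser a 1 * pser (diffs (diffs h)) 1 + y\<^sup>2 * pser a 1) * exp (y * pser h 1))"
  using factorial_moments_sums[OF radius generating generating_has_derivative
      generating_has_second_derivative]
  by (simp_all add: pser_diffs_h_1)

lemma pser_a_1_pos: "pser a 1 > 0"
proof -
  have "0 \<le> (\<Sum>k. p k 0)"
    using p_factorial_moments(1)[of 0] by (intro suminf_nonneg) (auto dest: sums_summable intro: p_nonneg)
  then show ?thesis
    using sums_unique[OF p_factorial_moments(1)[of 0]] pser_a_1_nonzero by simp
qed

definition weight :: "real \<Rightarrow> nat \<Rightarrow> real" where
  "weight y k = exp (- y * pser h 1) / pser a 1 * p k y"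

definition drift :: real where
  "drift = pser (diffs a) 1 / pser a 1"

definition sq_coeff_lin :: real where
  "sq_coeff_lin = 2 * drift + pser (diffs (diffs h)) 1 + 1"

definition sq_coeff_const :: real where
  "sq_coeff_const = (pser (diffs (diffs a)) 1 + pser (diffs a) 1) / pser a 1"

lemma weight_nonneg: "y \<ge> 0 \<Longrightarrow> weight y k \<ge> 0"
  unfolding weight_def using pser_a_1_pos p_nonneg by simp

lemma weight_sums_if_p_sums:
  assumes "(\<lambda>k. p k y * c k) sums (s * pser a 1 * exp (y * pser h 1))"
  shows "(\<lambda>k. weight y k * c k) sums s"
proof -
  have "(\<lambda>k. exp (- y * pser h 1) / pser a 1 * (p k y * c k)) sums
      (exp (- y * pser h 1) / pser a 1 * (s * pser a 1 * exp (y * pser h 1)))"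
    by (rule sums_mult[OF assms])
  then show ?thesis
    using pser_a_1_pos by (simp add: weight_def mult.assoc exp_minus field_simps)
qed

lemma weight_sums: "weight y sums 1"
  using weight_sums_if_p_sums[of y "\<lambda>_. 1" 1] p_factorial_moments(1)[of y] by simp

lemma weight_sums_moment1: "(\<lambda>k. weight y k * real k) sums (y + drift)"
proof (rule weight_sums_if_p_sums)
  have "(y + drift) * pser a 1 * exp (y * pser h 1) = (pser (diffs a) 1 + y * pser a 1) * exp (y * pser h 1)"
    using pser_a_1_pos by (simp add: drift_def field_simps)
  then show "(\<lambda>k. p k y * real k) sums ((y + drift) * pser a 1 * exp (y * pser h 1))"
    using p_factorial_moments(2)[of y] by (simp add: mult.commute)
qed

lemma weight_sums_moment2:
  "(\<lambda>k. weight y k * (real k)\<^sup>2) sums (y\<^sup>2 + sq_coeff_lin * y + sq_coeff_const)"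
proof (rule weight_sums_if_p_sums)
  have "(\<lambda>k. real k * (real k - 1) * p k y + real k * p k y) sums
      ((pser (diffs (diffs a)) 1 + 2 * y * pser (diffs a) 1
        + y * pser a 1 * pser (diffs (diffs h)) 1 + y\<^sup>2 * pser a 1) * exp (y * pser h 1)
       + (pser (diffs a) 1 + y * pser a 1) * exp (y * pser h 1))"
    by (rule sums_add[OF p_factorial_moments(3) p_factorial_moments(2)])
  moreover have "(\<lambda>k. real k * (real k - 1) * p k y + real k * p k y) = (\<lambda>k. p k y * (real k)\<^sup>2)"
    by (simp add: fun_eq_iff algebra_simps power2_eq_square)
  moreover have "(pser (diffs (diffs a)) 1 + 2 * y * pser (diffs a) 1
        + y * pser a 1 * pser (diffs (diffs h)) 1 + y\<^sup>2 * pser a 1) * exp (y * pser h 1)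
       + (pser (diffs a) 1 + y * pser a 1) * exp (y * pser h 1)
      = (y\<^sup>2 + sq_coeff_lin * y + sq_coeff_const) * pser a 1 * exp (y * pser h 1)"
    using pser_a_1_pos
    by (simp add: sq_coeff_lin_def sq_coeff_const_def drift_def field_simps power2_eq_square)
  ultimately show "(\<lambda>k. p k y * (real k)\<^sup>2) sums
      ((y\<^sup>2 + sq_coeff_lin * y + sq_coeff_const) * pser a 1 * exp (y * pser h 1))"
    by simp
qed

lemma weight_sums_scaled_nodes:
  assumes "\<delta> > 0"
  shows "(\<lambda>k. weight (x / \<delta>) k * (\<delta> * real k)) sums (x + \<delta> * drift)"
    and "(\<lambda>k. weight (x / \<delta>) k * (\<delta> * real k)\<^sup>2) sums
      (x\<^sup>2 + \<delta> * (sq_coeff_lin * x + \<delta> * sq_coeff_const))"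
proof -
  have x: "x = \<delta> * (x / \<delta>)"
    using assms by simp
  have "(\<lambda>k. \<delta> * (weight (x / \<delta>) k * real k)) sums (\<delta> * (x / \<delta> + drift))"
    by (rule sums_mult[OF weight_sums_moment1])
  then show "(\<lambda>k. weight (x / \<delta>) k * (\<delta> * real k)) sums (x + \<delta> * drift)"
    using assms by (simp add: algebra_simps)
  have "(\<lambda>k. \<delta>\<^sup>2 * (weight (x / \<delta>) k * (real k)\<^sup>2)) sums
      (\<delta>\<^sup>2 * ((x / \<delta>)\<^sup>2 + sq_coeff_lin * (x / \<delta>) + sq_coeff_const))"
    by (rule sums_mult[OF weight_sums_moment2])
  then show "(\<lambda>k. weight (x / \<delta>) k * (\<delta> * real k)\<^sup>2) sums
      (x\<^sup>2 + \<delta> * (sq_coeff_lin * x + \<delta> * sq_coeff_const))"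
    using assms by (simp add: algebra_simps power2_eq_square)
qed

definition estimate_error :: "real \<Rightarrow> real \<Rightarrow> real \<Rightarrow> real \<Rightarrow> real" where
  "estimate_error e K L \<delta> =
     (e + \<bar>L\<bar>) * (\<delta> * (\<bar>sq_coeff_lin\<bar> + \<delta> * \<bar>sq_coeff_const\<bar>))
     + K * (\<delta> * (\<bar>sq_coeff_lin - 2 * drift\<bar> + \<delta> * \<bar>sq_coeff_const\<bar>))"

lemma estimate_error_tendsto_0:
  assumes "(\<delta> \<longlongrightarrow> 0) F"
  shows "((\<lambda>n. estimate_error e K L (\<delta> n)) \<longlongrightarrow> 0) F"
proof -
  have "((\<lambda>n. estimate_error e K L (\<delta> n)) \<longlongrightarrow> estimate_error e K L 0) F"
    unfolding estimate_error_def by (intro tendsto_intros assms)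
  then show ?thesis
    by (simp add: estimate_error_def)
qed

lemma weighted_sum_estimate:
  fixes f :: "real \<Rightarrow> real"
  assumes \<delta>: "\<delta> > 0" and x: "x \<ge> 0" and e: "e \<ge> 0" and K: "K \<ge> 0"
    and modulus: "modulus_bound e K (\<lambda>s. f s - L * rho s)"
  shows "summable (\<lambda>k. weight (x / \<delta>) k * f (\<delta> * real k))"
    and "\<bar>(\<Sum>k. weight (x / \<delta>) k * f (\<delta> * real k)) - f x\<bar> \<le> (3 * e + estimate_error e K L \<delta>) * rho x"
proof -
  have "x / \<delta> \<ge> 0" and nodes_nonneg: "\<delta> * real k \<ge> 0" for k
    using \<delta> x by auto
  note estimate = positive_sum_estimate[OF weight_nonneg[OF this(1)] nodes_nonneg x e weight_sums
      weight_sums_scaled_nodes[OF \<delta>] modulus]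
  show "summable (\<lambda>k. weight (x / \<delta>) k * f (\<delta> * real k))"
    by (rule estimate(1))
  have "x\<^sup>2 + \<delta> * (sq_coeff_lin * x + \<delta> * sq_coeff_const) - 2 * x * (x + \<delta> * drift) + x\<^sup>2
      = \<delta> * ((sq_coeff_lin - 2 * drift) * x + \<delta> * sq_coeff_const)"
    by (simp add: algebra_simps power2_eq_square)
  then have "\<bar>(\<Sum>k. weight (x / \<delta>) k * f (\<delta> * real k)) - f x\<bar> \<le> 3 * e * rho x
      + (e + \<bar>L\<bar>) * \<bar>\<delta> * (sq_coeff_lin * x + \<delta> * sq_coeff_const)\<bar>
      + K * (\<delta> * ((sq_coeff_lin - 2 * drift) * x + \<delta> * sq_coeff_const))"
    using estimate(2) by simp
  also have "\<dots> \<le> 3 * e * rho x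
      + (e + \<bar>L\<bar>) * (\<delta> * (\<bar>sq_coeff_lin\<bar> + \<delta> * \<bar>sq_coeff_const\<bar>) * rho x)
      + K * (\<delta> * (\<bar>sq_coeff_lin - 2 * drift\<bar> + \<delta> * \<bar>sq_coeff_const\<bar>) * rho x)"
  proof -
    note bound = abs_scaled_linear_le_rho[OF x less_imp_le[OF \<delta>]]
    have "(e + \<bar>L\<bar>) * \<bar>\<delta> * (sq_coeff_lin * x + \<delta> * sq_coeff_const)\<bar>
        \<le> (e + \<bar>L\<bar>) * (\<delta> * (\<bar>sq_coeff_lin\<bar> + \<delta> * \<bar>sq_coeff_const\<bar>) * rho x)"
      using e by (intro mult_left_mono bound) auto
    moreover have "K * (\<delta> * ((sq_coeff_lin - 2 * drift) * x + \<delta> * sq_coeff_const))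
        \<le> K * (\<delta> * (\<bar>sq_coeff_lin - 2 * drift\<bar> + \<delta> * \<bar>sq_coeff_const\<bar>) * rho x)"
      using K abs_ge_self bound by (intro mult_left_mono) (fast intro: order_trans)
    ultimately show ?thesis
      by linarith
  qed
  also have "\<dots> = (3 * e + estimate_error e K L \<delta>) * rho x"
    by (simp add: estimate_error_def algebra_simps)
  finally show "\<bar>(\<Sum>k. weight (x / \<delta>) k * f (\<delta> * real k)) - f x\<bar> \<le> (3 * e + estimate_error e K L \<delta>) * rho x" .
qed

lemma Tstar_eq_weighted_sum:
  assumes n: "n > 0" and b: "b n > 0"
    and summable: "summable (\<lambda>k. weight (x / (b n / real n)) k * f (b n / real n * real k))"
  shows "Tstar a h p b n f x = (\<Sum>k. weight (x / (b n / real n)) k * f (b n / real n * real k))"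
proof -
  define c where "c = exp (- (real n / b n) * x * pser h 1) / pser a 1"
  define q where "q k = p k (real n / b n * x) * f (real k / real n * b n)" for k
  have weighted: "(\<lambda>k. weight (x / (b n / real n)) k * f (b n / real n * real k)) = (\<lambda>k. c * q k)"
    using n b by (simp add: fun_eq_iff weight_def c_def q_def field_simps)
  have "c \<noteq> 0"
    using pser_a_1_pos by (simp add: c_def)
  then have "summable q"
    using summable unfolding weighted by (simp add: summable_cmult_iff)
  have "Tstar a h p b n f x = c * suminf q"
    unfolding Tstar_def c_def q_def ..
  also have "\<dots> = (\<Sum>k. weight (x / (b n / real n)) k * f (b n / real n * real k))"
    unfolding weighted using suminf_mult[OF \<open>summable q\<close>] by simp
  finally show ?thesis .
qed

lemma Tstar_estimate:
  assumes "n > 0" and "b n > 0" and "x \<ge> 0" and "e \<ge> 0" and "K \<ge> 0"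
    and "modulus_bound e K (\<lambda>s. f s - L * rho s)"
  shows "\<bar>Tstar a h p b n f x - f x\<bar> \<le> (3 * e + estimate_error e K L (b n / real n)) * rho x"
proof -
  have \<delta>: "b n / real n > 0"
    using assms by simp
  note estimate = weighted_sum_estimate[OF \<delta> assms(3-6)]
  show ?thesis
    using Tstar_eq_weighted_sum[where b = b and n = n and f = f and x = x, OF assms(1,2) estimate(1)] estimate(2) by simp
qed

end

theorem theorem3p4:
  fixes a h :: "nat \<Rightarrow> real" and R :: real
    and p :: "nat \<Rightarrow> real \<Rightarrow> real" and b :: "nat \<Rightarrow> real"
    and f :: "real \<Rightarrow> real"
  assumes R: "R > 1"
    and a_conv: "\<And>t. \<bar>t\<bar> < R \<Longrightarrow> summable (\<lambda>k. a k * t ^ k)"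
    and h_conv: "\<And>t. \<bar>t\<bar> < R \<Longrightarrow> summable (\<lambda>k. h k * t ^ k)"
    and a0: "a 0 \<noteq> 0"
    and h0: "h 0 = 0"
    and h1: "h 1 \<noteq> 0"
    and gen: "\<And>x t. \<bar>t\<bar> < R \<Longrightarrow>
                 (\<lambda>k. p k x * t ^ k) sums (pser a t * exp (x * pser h t))"
    and p_nonneg: "\<And>k x. x \<ge> 0 \<Longrightarrow> p k x \<ge> 0"
    and A1: "pser a 1 \<noteq> 0"
    and H'1: "deriv (pser h) 1 = 1"
    and b_pos: "\<And>n. b n > 0"
    and b_mono: "mono b"
    and b_inf: "filterlim b at_top sequentially"
    and b_o: "(\<lambda>n. b n / real n) \<longlonglongrightarrow> 0"
    and f: "f \<in> C_rho_k"
  shows "(\<lambda>n. rho_norm (\<lambda>x. Tstar a h p b n f x - f x)) \<longlonglongrightarrow> 0"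
proof -
  interpret sheffer a h R p
    by unfold_locales (fact R a_conv h_conv gen p_nonneg A1 H'1)+
  obtain L where modulus: "\<And>e. e > 0 \<Longrightarrow> \<exists>K\<ge>0. modulus_bound e K (\<lambda>s. f s - L * rho s)"
    using C_rho_k_modulus_bound[OF f] by blast
  show ?thesis
  proof (rule rho_norm_tendsto_zeroI)
    fix \<epsilon> :: real assume "\<epsilon> > 0"
    then obtain K where K: "K \<ge> 0" "modulus_bound (\<epsilon> / 4) K (\<lambda>s. f s - L * rho s)"
      using modulus[of "\<epsilon> / 4"] by auto
    have "eventually (\<lambda>n. estimate_error (\<epsilon> / 4) K L (b n / real n) < \<epsilon> / 4) sequentially"
      using order_tendstoD(2)[OF estimate_error_tendsto_0[OF b_o], of "\<epsilon> / 4"] \<open>\<epsilon> > 0\<close> by simp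
    then show "eventually (\<lambda>n. \<forall>x\<ge>0. \<bar>Tstar a h p b n f x - f x\<bar> \<le> \<epsilon> * rho x) sequentially"
      using eventually_gt_at_top[of 0]
    proof eventually_elim
      case (elim n)
      show ?case
      proof (intro allI impI)
        fix x :: real assume "x \<ge> 0"
        have "\<bar>Tstar a h p b n f x - f x\<bar> \<le> (3 * (\<epsilon> / 4) + estimate_error (\<epsilon> / 4) K L (b n / real n)) * rho x"
          using Tstar_estimate[OF elim(2) b_pos \<open>x \<ge> 0\<close> _ K] \<open>\<epsilon> > 0\<close> by simp
        also have "\<dots> \<le> \<epsilon> * rho x"
          using mult_right_mono[OF _ less_imp_le[OF rho_pos], of _ "\<epsilon>" x] elim(1) by simp
        finally show "\<bar>Tstar a h p b n f x - f x\<bar> \<le> \<epsilon> * rho x" .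
      qed
    qed
  qed
qed

end
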